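(* Let $\alpha,\rho\in(-\infty,1)\setminus\{0\}$ and $\sigma>0$, and let $a,b$ be constants. Consider the market with risk-free rate $r=0$ and risky asset $\mathrm{d}S_t=\sigma S_t\,\mathrm{d}W^1_t$ (that is, drift $\mu=0$). The force of mortality $\lambda_t$ follows $$\mathrm{d}\lambda_t=a\lambda_t^2\,\mathrm{d}t+b\lambda_t^{3/2}\,\mathrm{d}W^2_t,$$ with $W^2$ a Brownian motion independent of $W^1$. In an insured drawdown fund with longevity credits, the wealth satisfies $$\mathrm{d}w_t=(k\lambda_tw_t-c_t)\,\mathrm{d}t+q_t\sigma S_t\,\mathrm{d}W^1_t,$$ with $k=1$, where $c_t$ is the consumption rate and $q_t$ the quantity of the risky asset held. Preferences are continuous-time Epstein--Zin with mortality and discount rate $\delta=0$, with aggregator $$f(c,V,\lambda)=\frac1\rho c^\rho(\alpha V)^{1-\frac\rho\alpha}-\lambda V.$$ The associated Hamilton--Jacobi--Bellman equation for the value function $V(t,w,\lambda,S)$ is $$0=\sup_{c,q}\Big[\partial_tV+q\sigma^2S^2\partial_{wS}V+\tfrac12q^2\sigma^2S^2\partial_{ww}V+\tfrac12\sigma^2S^2\partial_{SS}V+a\lambda^2\partial_\lambda V+\tfrac12b^2\lambda^3\partial_{\lambda\lambda}V+\partial_wV\,(k\lambda w-c)+f(c,V,\lambda)\Big].$$ Then this equation has the trivial solution $V\equiv0$, together with the additional analytic solution $$V=\frac{w^\alpha}{\alpha}\,\lambda^{\frac{\alpha(\rho-1)}{\rho}}\left(\frac{(k\alpha-1)\rho}{\alpha(\rho-1)}+a+\frac{b^2(\alpha(\rho-1)-\rho)}{2\rho}\right)^{\frac{\alpha(\rho-1)}{\rho}},$$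 valid so long as the term in brackets is positive.
   Context: The continuous-time Epstein--Zin utility with mortality of a consumption stream is the solution $V$ of the backward SDE $\mathrm{d}V_t=-f(c_t,V_t,\lambda_t)\,\mathrm{d}t+Z_t\,\mathrm{d}W_t$ with $\lim_{t\to\infty}V_t=0$. The parameter $k\in\{0,1\}$ indicates whether longevity credits (the term $k\lambda w$ in the wealth drift) are paid; here $k=1$. *)

theory Defs
  imports "HOL-Analysis.Analysis"
begin

definition EZ_f :: "real \<Rightarrow> real \<Rightarrow> real \<Rightarrow> real \<Rightarrow> real \<Rightarrow> real" where
  "EZ_f \<alpha> \<rho> c v l = (1/\<rho>) * c powr \<rho> * (\<alpha> * v) powr (1 - \<rho>/\<alpha>) - l * v"

definition HJB_expr ::
  "real \<Rightarrow> real \<Rightarrow> real \<Rightarrow> real \<Rightarrow> real \<Rightarrow> real \<Rightarrow>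
   (real \<Rightarrow> real \<Rightarrow> real \<Rightarrow> real \<Rightarrow> real) \<Rightarrow>
   real \<Rightarrow> real \<Rightarrow> real \<Rightarrow> real \<Rightarrow> real \<Rightarrow> real \<Rightarrow> real" where
  "HJB_expr \<sigma> a b k \<alpha> \<rho> V t w l s c q =
     deriv (\<lambda>x. V x w l s) t
     + q * \<sigma>^2 * s^2 * deriv (\<lambda>y. deriv (\<lambda>x. V t x l y) w) s
     + (1/2) * q^2 * \<sigma>^2 * s^2 * deriv (\<lambda>x. deriv (\<lambda>y. V t y l s) x) w
     + (1/2) * \<sigma>^2 * s^2 * deriv (\<lambda>x. deriv (\<lambda>y. V t w l y) x) s
     + a * l^2 * deriv (\<lambda>x. V t w x s) l
     + (1/2) * b^2 * l^3 * deriv (\<lambda>x. deriv (\<lambda>y. V t w y s) x) l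
     + deriv (\<lambda>x. V t x l s) w * (k * l * w - c)
     + EZ_f \<alpha> \<rho> c (V t w l s) l"

definition sup_is_zero :: "(real \<Rightarrow> real \<Rightarrow> real) \<Rightarrow> bool" where
  "sup_is_zero H \<longleftrightarrow> (\<forall>c>0. \<forall>q. H c q \<le> 0) \<and> (\<forall>e>0. \<exists>c>0. \<exists>q. H c q > - e)"

definition solves_HJB ::
  "real \<Rightarrow> real \<Rightarrow> real \<Rightarrow> real \<Rightarrow> real \<Rightarrow> real \<Rightarrow>
   (real \<Rightarrow> real \<Rightarrow> real \<Rightarrow> real \<Rightarrow> real) \<Rightarrow> bool" where
  "solves_HJB \<sigma> a b k \<alpha> \<rho> V \<longleftrightarrow>
     (\<forall>t w l s. w > 0 \<longrightarrow> l > 0 \<longrightarrow> s > 0 \<longrightarrow>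
        sup_is_zero (HJB_expr \<sigma> a b k \<alpha> \<rho> V t w l s))"

end

theory Submission
  imports Defs
begin

text \<open>
  Put \<open>\<beta> = \<alpha>(\<rho>-1)/\<rho>\<close>, let \<open>K\<close> be the bracket and \<open>X = w\<^sup>\<alpha> \<lambda>\<^sup>\<beta> K\<^sup>\<beta> = \<alpha>V\<close>.
  Since \<open>V\<close> does not depend on \<open>t\<close> and \<open>S\<close>, the \<open>q\<close>-part of the HJB bracket is
  \<open>q\<^sup>2\<sigma>\<^sup>2S\<^sup>2(\<alpha>-1)X/(2w\<^sup>2) \<le> 0\<close>. Every other term is a
  multiple of \<open>X\<close>, and the value of \<open>K\<close> is exactly what makes them collapse to
  \<open>\<lambda>KX \<phi>(c/c\<^sup>*)\<close> with \<open>c\<^sup>* = w\<lambda>K\<close> and \<open>\<phi>(u) = u\<^sup>\<rho>/\<rho> - u - (1/\<rho> - 1)\<close>. As \<open>\<phi>\<close> is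
  concave with \<open>\<phi>(1) = \<phi>'(1) = 0\<close>, the supremum over \<open>c, q\<close> is \<open>0\<close>, attained at
  \<open>c = c\<^sup>*\<close>, \<open>q = 0\<close>.
\<close>

lemma powr_div_exponent_minus_le:
  fixes \<rho> u :: real
  assumes "\<rho> < 1" "\<rho> \<noteq> 0" "u > 0"
  shows "u powr \<rho> / \<rho> - u \<le> 1 / \<rho> - 1"
proof -
  let ?g = "\<lambda>u::real. u - u powr \<rho> / \<rho>"
  have "convex_on {0<..} ?g"
    using assms by (intro f''_ge0_imp_convex derivative_eq_intros | simp add: mult_nonpos_nonneg)+
  moreover have "(?g has_field_derivative 0) (at 1 within {0<..})"
    using assms by (auto intro!: derivative_eq_intros)
  ultimately have "?g u - ?g 1 \<ge> 0 * (u - 1)"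
    using assms by (intro convex_on_imp_above_tangent) (auto simp: interior_open)
  then show ?thesis by simp
qed

lemma deriv_powr_mult_const:
  fixes x p C :: real
  assumes "x > 0"
  shows "deriv (\<lambda>y. y powr p * C) x = p * x powr (p - 1) * C"
  using assms by (intro DERIV_imp_deriv) (auto intro!: derivative_eq_intros)

lemma deriv2_powr_mult_const:
  fixes x p C :: real
  assumes "x > 0"
  shows "deriv (\<lambda>y. deriv (\<lambda>z. z powr p * C) y) x = p * (p - 1) * x powr (p - 2) * C"
proof -
  have "eventually (\<lambda>y. y \<in> {0<..}) (nhds x)"
    using assms by (intro eventually_nhds_in_open) auto
  then have "eventually (\<lambda>y. deriv (\<lambda>z. z powr p * C) y = p * y powr (p - 1) * C) (nhds x)"
    by eventually_elim (simp add: deriv_powr_mult_const)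
  then have "deriv (\<lambda>y. deriv (\<lambda>z. z powr p * C) y) x = deriv (\<lambda>y. p * y powr (p - 1) * C) x"
    by (intro deriv_cong_ev) auto
  also have "\<dots> = p * (p - 1) * x powr (p - 2) * C"
    using assms by (intro DERIV_imp_deriv) (auto intro!: derivative_eq_intros simp: algebra_simps)
  finally show ?thesis .
qed

lemma HJB_expr_powr_candidate:
  fixes \<alpha> \<beta> C w l :: real
  assumes "\<alpha> \<noteq> 0" "w > 0" "l > 0"
  defines "X \<equiv> w powr \<alpha> * l powr \<beta> * C"
  shows "HJB_expr \<sigma> a b k \<alpha> \<rho> (\<lambda>t w l s. w powr \<alpha> / \<alpha> * l powr \<beta> * C) t w l s c q
     = (1/2) * q^2 * \<sigma>^2 * s^2 * ((\<alpha> - 1) * X / w^2)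
       + l * X * (a * \<beta> + (1/2) * b^2 * \<beta> * (\<beta> - 1) + k * \<alpha> - 1) / \<alpha>
       - c * X / w + c powr \<rho> * X powr (1 - \<rho> / \<alpha>) / \<rho>"
proof -
  have w_slice: "(\<lambda>y. y powr \<alpha> / \<alpha> * l powr \<beta> * C) = (\<lambda>y. y powr \<alpha> * (l powr \<beta> * C / \<alpha>))"
    by auto
  have l_slice: "(\<lambda>y. w powr \<alpha> / \<alpha> * y powr \<beta> * C) = (\<lambda>y. y powr \<beta> * (w powr \<alpha> * C / \<alpha>))"
    by auto
  have V_w: "deriv (\<lambda>y. y powr \<alpha> / \<alpha> * l powr \<beta> * C) w = \<alpha> * w powr (\<alpha> - 1) * (l powr \<beta> * C / \<alpha>)"
   and V_ww: "deriv (\<lambda>x. deriv (\<lambda>y. y powr \<alpha> / \<alpha> * l powr \<beta> * C) x) w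
      = \<alpha> * (\<alpha> - 1) * w powr (\<alpha> - 2) * (l powr \<beta> * C / \<alpha>)"
   and V_l: "deriv (\<lambda>y. w powr \<alpha> / \<alpha> * y powr \<beta> * C) l = \<beta> * l powr (\<beta> - 1) * (w powr \<alpha> * C / \<alpha>)"
   and V_ll: "deriv (\<lambda>x. deriv (\<lambda>y. w powr \<alpha> / \<alpha> * y powr \<beta> * C) x) l
      = \<beta> * (\<beta> - 1) * l powr (\<beta> - 2) * (w powr \<alpha> * C / \<alpha>)"
    unfolding w_slice l_slice using assms
    by (simp_all only: deriv_powr_mult_const deriv2_powr_mult_const)
  have "HJB_expr \<sigma> a b k \<alpha> \<rho> (\<lambda>t w l s. w powr \<alpha> / \<alpha> * l powr \<beta> * C) t w l s c q
     = (1/2) * q^2 * \<sigma>^2 * s^2 * (\<alpha> * (\<alpha> - 1) * w powr (\<alpha> - 2) * (l powr \<beta> * C / \<alpha>))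
       + a * l^2 * (\<beta> * l powr (\<beta> - 1) * (w powr \<alpha> * C / \<alpha>))
       + (1/2) * b^2 * l^3 * (\<beta> * (\<beta> - 1) * l powr (\<beta> - 2) * (w powr \<alpha> * C / \<alpha>))
       + \<alpha> * w powr (\<alpha> - 1) * (l powr \<beta> * C / \<alpha>) * (k * l * w - c)
       + EZ_f \<alpha> \<rho> c (w powr \<alpha> / \<alpha> * l powr \<beta> * C) l"
    unfolding HJB_expr_def by (simp only: V_w V_ww V_l V_ll deriv_const)
  also have "\<dots> = (1/2) * q^2 * \<sigma>^2 * s^2 * ((\<alpha> - 1) * X / w^2)
       + l * X * (a * \<beta> + (1/2) * b^2 * \<beta> * (\<beta> - 1) + k * \<alpha> - 1) / \<alpha>
       - c * X / w + c powr \<rho> * X powr (1 - \<rho> / \<alpha>) / \<rho>"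
  proof -
    have power_shifts: "w powr (\<alpha> - 1) = w powr \<alpha> / w" "w powr (\<alpha> - 2) = w powr \<alpha> / w^2"
      "l powr (\<beta> - 1) = l powr \<beta> / l" "l powr (\<beta> - 2) = l powr \<beta> / l^2"
      "\<alpha> * (w powr \<alpha> / \<alpha> * l powr \<beta> * C) = X"
      using assms by (simp_all add: powr_diff powr_numeral)
    show ?thesis
      unfolding EZ_f_def power_shifts using assms unfolding X_def
      by (simp add: field_simps power2_eq_square power3_eq_cube)
  qed
  finally show ?thesis .
qed

lemma candidate_powr_EZ_exponent:
  fixes \<alpha> \<rho> w l K :: real
  assumes "\<alpha> \<noteq> 0" "\<rho> \<noteq> 0" "w > 0" "l > 0" "K > 0"
  defines "\<beta> \<equiv> \<alpha> * (\<rho> - 1) / \<rho>"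
  shows "(w powr \<alpha> * l powr \<beta> * K powr \<beta>) powr (1 - \<rho> / \<alpha>)
    = l * K * (w powr \<alpha> * l powr \<beta> * K powr \<beta>) / (w * l * K) powr \<rho>"
proof -
  let ?X = "w powr \<alpha> * l powr \<beta> * K powr \<beta>"
  have "\<beta> * \<rho> / \<alpha> = \<rho> - 1"
    using assms by (simp add: field_simps)
  then have "?X powr (\<rho> / \<alpha>) = (w * l * K) powr \<rho> / (l * K)"
    using assms by (simp add: powr_mult powr_powr powr_diff)
  moreover have "?X powr (1 - \<rho> / \<alpha>) = ?X / ?X powr (\<rho> / \<alpha>)"
    using assms by (simp add: powr_diff)
  ultimately show ?thesis
    by simp
qed

lemma sup_is_zeroI:
  assumes "\<And>c q. c > 0 \<Longrightarrow> H c q \<le> 0" and "c' > 0" and "H c' q' = 0"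
  shows "sup_is_zero H"
proof -
  have "\<forall>e>0. \<exists>c>0. \<exists>q. H c q > - e"
    using assms(2,3) by (metis neg_less_0_iff_less)
  with assms(1) show ?thesis
    unfolding sup_is_zero_def by blast
qed

lemma solves_HJB_zero: "solves_HJB \<sigma> a b k \<alpha> \<rho> (\<lambda>t w l s. 0)"
  unfolding solves_HJB_def
  by (intro allI impI sup_is_zeroI[where c' = 1 and q' = 0]) (simp_all add: HJB_expr_def EZ_f_def)

lemma solves_HJB_powr_candidate:
  fixes \<alpha> \<rho> \<sigma> a b k K :: real
  assumes \<alpha>: "\<alpha> < 1" "\<alpha> \<noteq> 0" and \<rho>: "\<rho> < 1" "\<rho> \<noteq> 0"
    and K_eq: "K = (k * \<alpha> - 1) * \<rho> / (\<alpha> * (\<rho> - 1)) + a + b^2 * (\<alpha> * (\<rho> - 1) - \<rho>) / (2 * \<rho>)"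
    and K_pos: "K > 0"
  shows "solves_HJB \<sigma> a b k \<alpha> \<rho>
    (\<lambda>t w l s. w powr \<alpha> / \<alpha> * l powr (\<alpha> * (\<rho> - 1) / \<rho>) * K powr (\<alpha> * (\<rho> - 1) / \<rho>))"
  unfolding solves_HJB_def
proof (intro allI impI)
  fix t w l s :: real
  assume w: "w > 0" and l: "l > 0" and "s > 0"
  define \<beta> where "\<beta> = \<alpha> * (\<rho> - 1) / \<rho>"
  define V :: "real \<Rightarrow> real \<Rightarrow> real \<Rightarrow> real \<Rightarrow> real"
    where "V = (\<lambda>t w l s. w powr \<alpha> / \<alpha> * l powr \<beta> * K powr \<beta>)"
  define X where "X = w powr \<alpha> * l powr \<beta> * K powr \<beta>"
  define c' where "c' = w * l * K"
  have X_pos: "X > 0" and c'_pos: "c' > 0"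
    using w l K_pos by (simp_all add: X_def c'_def)
  have HJB_eq: "HJB_expr \<sigma> a b k \<alpha> \<rho> V t w l s c q
      = (1/2) * q^2 * \<sigma>^2 * s^2 * ((\<alpha> - 1) * X / w^2)
        + l * K * X * ((c / c') powr \<rho> / \<rho> - c / c' - (1 / \<rho> - 1))"
    if "c > 0" for c q
  proof -
    have drift: "l * X * (a * \<beta> + (1/2) * b^2 * \<beta> * (\<beta> - 1) + k * \<alpha> - 1) / \<alpha>
        = - l * K * X * (1 / \<rho> - 1)"
      using \<alpha> \<rho> unfolding K_eq \<beta>_def by (simp add: field_simps)
    have consumption: "c powr \<rho> * X powr (1 - \<rho> / \<alpha>) = (c / c') powr \<rho> * (l * K * X)"
      using candidate_powr_EZ_exponent[OF \<alpha>(2) \<rho>(2) w l K_pos] that c'_pos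
      by (simp add: X_def c'_def \<beta>_def powr_divide)
    have "HJB_expr \<sigma> a b k \<alpha> \<rho> V t w l s c q
        = (1/2) * q^2 * \<sigma>^2 * s^2 * ((\<alpha> - 1) * X / w^2)
          + l * X * (a * \<beta> + (1/2) * b^2 * \<beta> * (\<beta> - 1) + k * \<alpha> - 1) / \<alpha>
          - c * X / w + c powr \<rho> * X powr (1 - \<rho> / \<alpha>) / \<rho>"
      unfolding V_def X_def by (rule HJB_expr_powr_candidate[OF \<alpha>(2) w l])
    also have "\<dots> = (1/2) * q^2 * \<sigma>^2 * s^2 * ((\<alpha> - 1) * X / w^2)
        + l * K * X * ((c / c') powr \<rho> / \<rho> - c / c' - (1 / \<rho> - 1))"
      unfolding drift consumption using w l K_pos by (simp add: c'_def field_simps)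
    finally show ?thesis .
  qed
  have "sup_is_zero (HJB_expr \<sigma> a b k \<alpha> \<rho> V t w l s)"
  proof (rule sup_is_zeroI[where c' = c' and q' = 0])
    fix c q :: real
    assume "c > 0"
    have "(1/2) * q^2 * \<sigma>^2 * s^2 * ((\<alpha> - 1) * X / w^2) \<le> 0"
      using \<alpha> X_pos by (intro mult_nonneg_nonpos divide_nonpos_nonneg mult_nonpos_nonneg) simp_all
    moreover have "(c / c') powr \<rho> / \<rho> - c / c' - (1 / \<rho> - 1) \<le> 0"
      using powr_div_exponent_minus_le[OF \<rho>, of "c / c'"] \<open>c > 0\<close> c'_pos by simp
    with l K_pos X_pos have "l * K * X * ((c / c') powr \<rho> / \<rho> - c / c' - (1 / \<rho> - 1)) \<le> 0"
      by (simp add: mult_nonneg_nonpos)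
    ultimately show "HJB_expr \<sigma> a b k \<alpha> \<rho> V t w l s c q \<le> 0"
      using HJB_eq[OF \<open>c > 0\<close>, of q] by linarith
  qed (use HJB_eq c'_pos in simp_all)
  then show "sup_is_zero (HJB_expr \<sigma> a b k \<alpha> \<rho>
    (\<lambda>t w l s. w powr \<alpha> / \<alpha> * l powr (\<alpha> * (\<rho> - 1) / \<rho>) * K powr (\<alpha> * (\<rho> - 1) / \<rho>)) t w l s)"
    by (simp only: V_def \<beta>_def)
qed

theorem theorem4:
  fixes \<alpha> \<rho> \<sigma> a b :: real
  assumes "\<alpha> < 1" "\<alpha> \<noteq> 0" "\<rho> < 1" "\<rho> \<noteq> 0" "\<sigma> > 0"
    and "(1 * \<alpha> - 1) * \<rho> / (\<alpha> * (\<rho> - 1)) + a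
           + b^2 * (\<alpha> * (\<rho> - 1) - \<rho>) / (2 * \<rho>) > 0"
  shows "solves_HJB \<sigma> a b 1 \<alpha> \<rho> (\<lambda>t w l s. 0)
       \<and> solves_HJB \<sigma> a b 1 \<alpha> \<rho>
           (\<lambda>t w l s. w powr \<alpha> / \<alpha> * l powr (\<alpha> * (\<rho> - 1) / \<rho>)
              * ((1 * \<alpha> - 1) * \<rho> / (\<alpha> * (\<rho> - 1)) + a
                 + b^2 * (\<alpha> * (\<rho> - 1) - \<rho>) / (2 * \<rho>)) powr (\<alpha> * (\<rho> - 1) / \<rho>))"
  using solves_HJB_zero solves_HJB_powr_candidate[OF assms(1-4) refl assms(6)] by blast

end
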